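(* Let $\mathcal{T}:L^2(\mathbb{R})\to L^2(\mathbb{R})$ be a nonzero self-adjoint Hilbert–Schmidt operator, $\mathcal{T} = \sum_{k\in\mathbb{N}}\lambda_k v_kv_k^*$ with $(v_k)$ an orthonormal basis of $L^2(\mathbb{R})$ and real eigenvalues ordered so that $\|\mathcal{T}\| = |\lambda_1|>0$. Suppose $\lambda_1>0$ and that for some $0<\gamma\le1$, $\lambda_1 - |\lambda_k|\ge\gamma\lambda_1$ for all $k>1$. Given $u_0\in L^2(\mathbb{R})$, define $u_{k+1} = \mathcal{T}u_k/\|\mathcal{T}u_k\|_{L^2(\mathbb{R})}$. If $|\langle v_1,u_0\rangle_{L^2}|\ge\eta>0$, then for every $k\ge1$, $$\big\|u_k - \mathrm{sign}(\langle v_1,u_0\rangle)v_1\big\|_{L^2}^2\le 2(1-\gamma)^{2k}\frac{\|u_0\|_{L^2}^2}{\eta^2}.$$ Moreover, if in addition $k\ge \frac{\log(\eta/4\|u_0\|_{L^2})}{\log(1-\gamma)}$, then $$\Big\|\sqrt{\langle u_k,\mathcal{T}u_k\rangle}\,u_k - \sqrt{\lambda_1}\,\mathrm{sign}(\langle v_1,u_0\rangle)v_1\Big\|_{L^2}^2\le 18\lambda_1(1-\gamma)^{2k}\frac{\|u_0\|_{L^2}^2}{\eta^2}.$$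
   Context: $v_kv_k^*$ denotes the rank-one operator $h\mapsto v_k\langle v_k,h\rangle$. *)

theory Defs
  imports "HOL-Analysis.Analysis"
begin

end

theory Submission
  imports Defs
begin

text \<open>Split every vector as \<open>x = (v\<^sub>0 \<bullet> x) v\<^sub>0 + r\<close> with \<open>r \<bottom> v\<^sub>0\<close>. The operator multiplies the
  first part by \<open>\<lambda>\<^sub>0\<close> and, by the spectral gap and Bessel's inequality, shrinks \<open>r\<close> by at least
  \<open>(1 - \<gamma>) \<lambda>\<^sub>0\<close>; normalisation rescales both parts by the same positive factor. Hence the sign of
  \<open>v\<^sub>0 \<bullet> u\<^sub>k\<close> never changes and \<open>\<parallel>r\<^sub>k\<parallel> / \<bar>v\<^sub>0 \<bullet> u\<^sub>k\<bar>\<close> decays like \<open>(1 - \<gamma>)\<^sup>k\<close>. For a unit vector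
  with small orthogonal part \<open>\<rho>\<close>, both the distance to \<open>\<plusminus>v\<^sub>0\<close> and the error of the Rayleigh
  quotient \<open>\<langle>u, T u\<rangle>\<close> are controlled by \<open>\<rho>\<^sup>2\<close>.\<close>

lemma bessel_inequality_partial:
  fixes v :: "nat \<Rightarrow> 'a::real_inner"
  assumes orthonormal: "\<And>i j. v i \<bullet> v j = (if i = j then 1 else 0)"
  shows "(\<Sum>k<n. (v k \<bullet> h)\<^sup>2) \<le> (norm h)\<^sup>2"
proof -
  define p where "p = (\<Sum>k<n. (v k \<bullet> h) *\<^sub>R v k)"
  have inner_p: "v j \<bullet> p = (if j < n then v j \<bullet> h else 0)" for j
  proof -
    have "v j \<bullet> p = (\<Sum>k<n. (v k \<bullet> h) * (v j \<bullet> v k))"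
      by (simp add: p_def inner_sum_right)
    also have "\<dots> = (\<Sum>k<n. if k = j then v j \<bullet> h else 0)"
      using orthonormal by (intro sum.cong) auto
    finally show ?thesis by simp
  qed
  have "p \<bullet> p = (\<Sum>k<n. (v k \<bullet> h) * (v k \<bullet> p))"
    by (subst (1) p_def) (simp add: inner_sum_left)
  also have "\<dots> = (\<Sum>k<n. (v k \<bullet> h)\<^sup>2)"
    using inner_p by (simp add: power2_eq_square)
  finally have "p \<bullet> p = (\<Sum>k<n. (v k \<bullet> h)\<^sup>2)" .
  moreover have "h \<bullet> p = (\<Sum>k<n. (v k \<bullet> h)\<^sup>2)"
    by (simp add: p_def inner_sum_right power2_eq_square inner_commute)
  moreover have "(h - p) \<bullet> (h - p) = h \<bullet> h - 2 * (h \<bullet> p) + p \<bullet> p"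
    by (simp add: inner_diff_left inner_diff_right inner_commute)
  ultimately show ?thesis
    using inner_ge_zero[of "h - p"] by (simp add: power2_norm_eq_inner)
qed

lemma bessel_inequality:
  fixes v :: "nat \<Rightarrow> 'a::real_inner"
  assumes "\<And>i j. v i \<bullet> v j = (if i = j then 1 else 0)"
  shows "summable (\<lambda>k. (v k \<bullet> h)\<^sup>2)" and "(\<Sum>k. (v k \<bullet> h)\<^sup>2) \<le> (norm h)\<^sup>2"
proof -
  show summable: "summable (\<lambda>k. (v k \<bullet> h)\<^sup>2)"
    by (rule bounded_imp_summable[where B="(norm h)\<^sup>2"])
      (simp, metis bessel_inequality_partial[OF assms] lessThan_Suc_atMost)
  show "(\<Sum>k. (v k \<bullet> h)\<^sup>2) \<le> (norm h)\<^sup>2"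
    by (rule suminf_le_const[OF summable]) (rule bessel_inequality_partial[OF assms])
qed

definition orth_comp :: "'a::real_inner \<Rightarrow> 'a \<Rightarrow> 'a"
  where "orth_comp e x = x - (e \<bullet> x) *\<^sub>R e"

lemma inner_orth_comp:
  assumes "norm e = 1"
  shows "e \<bullet> orth_comp e x = 0"
  using assms by (simp add: orth_comp_def inner_diff_right norm_eq_sqrt_inner)

lemma norm_orth_comp_sq:
  assumes "norm e = 1"
  shows "(norm x)\<^sup>2 = (e \<bullet> x)\<^sup>2 + (norm (orth_comp e x))\<^sup>2"
proof -
  have "orthogonal ((e \<bullet> x) *\<^sub>R e) (orth_comp e x)"
    using inner_orth_comp[OF assms] by (simp add: orthogonal_def)
  from norm_add_Pythagorean[OF this] show ?thesis
    using assms by (simp add: orth_comp_def power_mult_distrib)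
qed

lemma orth_comp_scaleR: "orth_comp e (c *\<^sub>R x) = c *\<^sub>R orth_comp e x"
  by (simp add: orth_comp_def algebra_simps)

lemma norm_orth_comp_le: "norm e = 1 \<Longrightarrow> norm (orth_comp e x) \<le> norm x"
  by (rule power2_le_imp_le) (simp_all add: norm_orth_comp_sq[of e x])

lemma norm_diff_scaleR_sq:
  "(norm (a *\<^sub>R x - b *\<^sub>R y))\<^sup>2 = a\<^sup>2 * (norm x)\<^sup>2 - 2 * a * b * (x \<bullet> y) + b\<^sup>2 * (norm y)\<^sup>2"
  unfolding power2_norm_eq_inner
  by (simp add: inner_diff_left inner_diff_right inner_commute power2_eq_square algebra_simps)

lemma one_minus_abs_le_sq:
  fixes a b :: real
  assumes "a\<^sup>2 + b\<^sup>2 = 1"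
  shows "1 - \<bar>a\<bar> \<le> b\<^sup>2"
proof -
  have "\<bar>a\<bar> \<le> 1"
    using assms abs_square_le_1[of a] zero_le_power2[of b] by linarith
  then have "\<bar>a\<bar> * \<bar>a\<bar> \<le> \<bar>a\<bar>"
    by (rule mult_left_le) simp
  then show ?thesis
    using assms by (simp add: power2_eq_square abs_mult_self_eq)
qed

lemma norm_diff_sgn_sq_le:
  assumes e: "norm e = 1" and x: "norm x = 1"
  shows "(norm (x - sgn (e \<bullet> x) *\<^sub>R e))\<^sup>2 \<le> 2 * (norm (orth_comp e x))\<^sup>2"
proof -
  define a where "a = e \<bullet> x"
  have pyth: "a\<^sup>2 + (norm (orth_comp e x))\<^sup>2 = 1"
    using norm_orth_comp_sq[OF e, of x] x by (simp add: a_def)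
  have "(norm (x - sgn a *\<^sub>R e))\<^sup>2 = 1 - 2 * \<bar>a\<bar> + (sgn a)\<^sup>2"
    using norm_diff_scaleR_sq[of 1 x "sgn a" e] e x by (simp add: a_def inner_commute abs_sgn)
  moreover have "(sgn a)\<^sup>2 = of_bool (a \<noteq> 0)"
    by (simp add: power2_eq_square)
  ultimately show ?thesis
    using pyth one_minus_abs_le_sq[OF pyth] by (cases "a = 0") (simp_all add: a_def)
qed

lemma sqrt_rayleigh_estimate:
  fixes l q a \<rho> :: real
  assumes l: "0 < l" and pyth: "a\<^sup>2 + \<rho>\<^sup>2 = 1" and q: "\<bar>q - l * a\<^sup>2\<bar> \<le> l * \<rho>\<^sup>2"
    and small: "2 * \<rho>\<^sup>2 \<le> 1"
  shows "0 \<le> q" and "q + l - 2 * sqrt q * sqrt l * \<bar>a\<bar> \<le> 4 * l * \<rho>\<^sup>2"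
proof -
  have la: "l * a\<^sup>2 = l - l * \<rho>\<^sup>2"
    using pyth by (metis add_diff_cancel_right' right_diff_distrib mult_1_right)
  have q_bounds: "l * a\<^sup>2 - l * \<rho>\<^sup>2 \<le> q" "q \<le> l * a\<^sup>2 + l * \<rho>\<^sup>2"
    using q by (simp_all add: abs_le_iff)
  have "2 * (l * \<rho>\<^sup>2) \<le> l"
    using mult_left_mono[OF small, of l] l by simp
  then show q_nonneg: "0 \<le> q"
    using q_bounds la by linarith
  have l_minus_q: "l - q \<le> 2 * (l * \<rho>\<^sup>2)" and "q \<le> l"
    using q_bounds la mult_nonneg_nonneg[of l "\<rho>\<^sup>2"] l by linarith+
  then have sqrt_le: "sqrt q \<le> sqrt l" by simp
  have "(sqrt l - sqrt q)\<^sup>2 \<le> (sqrt l - sqrt q) * (sqrt l + sqrt q)"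
    unfolding power2_eq_square using sqrt_le q_nonneg by (intro mult_left_mono) simp_all
  also have "\<dots> = l - q"
    using l q_nonneg by (simp add: algebra_simps)
  finally have first: "(sqrt l - sqrt q)\<^sup>2 \<le> 2 * (l * \<rho>\<^sup>2)"
    using l_minus_q by linarith
  have "sqrt q * sqrt l \<le> l"
    using mult_right_mono[OF sqrt_le, of "sqrt l"] l by simp
  then have second: "sqrt q * sqrt l * (1 - \<bar>a\<bar>) \<le> l * \<rho>\<^sup>2"
    using one_minus_abs_le_sq[OF pyth] abs_square_le_1[of a] pyth zero_le_power2[of \<rho>] q_nonneg l
    by (intro mult_mono) linarith+
  have "q + l - 2 * sqrt q * sqrt l * \<bar>a\<bar> = (sqrt l - sqrt q)\<^sup>2 + 2 * (sqrt q * sqrt l * (1 - \<bar>a\<bar>))"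
    using l q_nonneg by (simp add: power2_diff algebra_simps)
  then show "q + l - 2 * sqrt q * sqrt l * \<bar>a\<bar> \<le> 4 * l * \<rho>\<^sup>2"
    using first second by linarith
qed

lemma norm_sqrt_rayleigh_sq_le:
  assumes e: "norm e = 1" and x: "norm x = 1" and l: "0 < l"
    and q: "\<bar>q - l * (e \<bullet> x)\<^sup>2\<bar> \<le> l * (norm (orth_comp e x))\<^sup>2"
    and small: "2 * (norm (orth_comp e x))\<^sup>2 \<le> 1"
  shows "(norm (sqrt q *\<^sub>R x - (sqrt l * sgn (e \<bullet> x)) *\<^sub>R e))\<^sup>2 \<le> 4 * l * (norm (orth_comp e x))\<^sup>2"
proof -
  define a where "a = e \<bullet> x"
  have pyth: "a\<^sup>2 + (norm (orth_comp e x))\<^sup>2 = 1"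
    using norm_orth_comp_sq[OF e, of x] x by (simp add: a_def)
  note estimate = sqrt_rayleigh_estimate[OF l pyth q[folded a_def] small]
  have "a \<noteq> 0"
    using pyth small by auto
  then have "(sgn a)\<^sup>2 = 1"
    by (simp add: power2_eq_square)
  then have "(norm (sqrt q *\<^sub>R x - (sqrt l * sgn a) *\<^sub>R e))\<^sup>2 = q + l - 2 * sqrt q * sqrt l * \<bar>a\<bar>"
    using norm_diff_scaleR_sq[of "sqrt q" x "sqrt l * sgn a" e] e x l estimate(1)
    by (simp add: a_def inner_commute abs_sgn power_mult_distrib mult_ac)
  then show ?thesis
    using estimate(2) by (simp add: a_def)
qed

text \<open>Since \<open>ln 0 = 0\<close>, the logarithmic hypothesis says nothing when \<open>b = 0\<close>; there \<open>1 \<le> k\<close> is what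
  excludes \<open>0 ^ 0 = 1\<close>.\<close>

lemma power_le_of_ln_quotient_le:
  fixes b c :: real
  assumes "0 \<le> b" "b < 1" "0 < c" "1 \<le> k" and bound: "ln c / ln b \<le> real k"
  shows "b ^ k \<le> c"
proof (cases "b = 0")
  case True
  then show ?thesis
    using assms by (simp add: power_0_left)
next
  case False
  then have "ln b < 0"
    using assms by simp
  then have "ln (b ^ k) \<le> ln c"
    using bound by (simp add: ln_realpow neg_divide_le_eq)
  then show ?thesis
    using assms False by simp
qed

lemma power_sq_ratio_le_of_ln_quotient_le:
  fixes b \<eta> N :: real
  assumes b: "0 \<le> b" "b < 1" and \<eta>: "0 < \<eta>" "\<eta> \<le> N"
    and k: "1 \<le> k" "ln (\<eta> / (4 * N)) / ln b \<le> real k"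
  shows "b ^ (2 * k) * N\<^sup>2 / \<eta>\<^sup>2 \<le> 1 / 16"
proof -
  have "b ^ k \<le> \<eta> / (4 * N)"
    using assms by (intro power_le_of_ln_quotient_le) simp_all
  then have "b ^ k * N / \<eta> \<le> \<eta> / (4 * N) * N / \<eta>"
    using \<eta> by (intro divide_right_mono mult_right_mono) simp_all
  also have "\<dots> = 1 / 4"
    using \<eta> by simp
  finally have "(b ^ k * N / \<eta>)\<^sup>2 \<le> (1 / 4)\<^sup>2"
    using b \<eta> by (intro power_mono) simp_all
  then show ?thesis
    by (simp add: power_mult_distrib power_divide power_mult mult.commute)
qed

locale diagonal_operator =
  fixes T :: "'a::real_inner \<Rightarrow> 'a" and v :: "nat \<Rightarrow> 'a" and lam :: "nat \<Rightarrow> real"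
  assumes orthonormal: "\<And>i j. v i \<bullet> v j = (if i = j then 1 else 0)"
    and expansion: "\<And>h. (\<lambda>k. (lam k * (v k \<bullet> h)) *\<^sub>R v k) sums T h"
begin

lemma linear_T: "linear T"
proof
  fix x y :: 'a and c :: real
  have "(\<lambda>k. (lam k * (v k \<bullet> x)) *\<^sub>R v k + (lam k * (v k \<bullet> y)) *\<^sub>R v k) sums (T x + T y)"
    by (intro sums_add expansion)
  then have "(\<lambda>k. (lam k * (v k \<bullet> (x + y))) *\<^sub>R v k) sums (T x + T y)"
    by (simp add: inner_add_right distrib_left scaleR_add_left)
  then show "T (x + y) = T x + T y"
    using expansion sums_unique2 by blast
  have "(\<lambda>k. c *\<^sub>R ((lam k * (v k \<bullet> x)) *\<^sub>R v k)) sums (c *\<^sub>R T x)"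
    by (intro sums_scaleR_right expansion)
  then have "(\<lambda>k. (lam k * (v k \<bullet> (c *\<^sub>R x))) *\<^sub>R v k) sums (c *\<^sub>R T x)"
    by (simp add: algebra_simps)
  then show "T (c *\<^sub>R x) = c *\<^sub>R T x"
    using expansion sums_unique2 by blast
qed

lemma sums_inner_T: "(\<lambda>k. lam k * (v k \<bullet> h) * (v k \<bullet> g)) sums (T h \<bullet> g)"
  using bounded_linear.sums[OF bounded_linear_inner_left[of g] expansion[of h]]
  by (simp add: inner_scaleR_left)

lemma inner_T_basis: "T h \<bullet> v j = lam j * (v j \<bullet> h)"
proof -
  have "(\<lambda>k. lam k * (v k \<bullet> h) * (v k \<bullet> v j)) = (\<lambda>k. if k = j then lam k * (v k \<bullet> h) else 0)"
    using orthonormal by auto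
  then have "(\<lambda>k. lam k * (v k \<bullet> h) * (v k \<bullet> v j)) sums (lam j * (v j \<bullet> h))"
    using sums_single[of j "\<lambda>k. lam k * (v k \<bullet> h)"] by simp
  then show ?thesis
    using sums_inner_T sums_unique2 by blast
qed

lemma T_basis: "T (v j) = lam j *\<^sub>R v j"
proof -
  have "(\<lambda>k. (lam k * (v k \<bullet> v j)) *\<^sub>R v k) = (\<lambda>k. if k = j then lam k *\<^sub>R v k else 0)"
    using orthonormal by auto
  then have "(\<lambda>k. (lam k * (v k \<bullet> v j)) *\<^sub>R v k) sums (lam j *\<^sub>R v j)"
    using sums_single[of j "\<lambda>k. lam k *\<^sub>R v k"] by simp
  then show ?thesis
    using expansion sums_unique2 by blast
qed

lemma norm_T_le:
  assumes "0 \<le> B" and bound: "\<And>k. v k \<bullet> h \<noteq> 0 \<Longrightarrow> \<bar>lam k\<bar> \<le> B"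
  shows "norm (T h) \<le> B * norm h"
proof -
  define b where "b = (\<lambda>k. (v k \<bullet> h)\<^sup>2)"
  have summable: "summable b" and sum_le: "suminf b \<le> (norm h)\<^sup>2"
    using bessel_inequality[OF orthonormal, of h] by (simp_all add: b_def)
  have termwise: "(lam k)\<^sup>2 * b k \<le> B\<^sup>2 * b k" for k
  proof (cases "v k \<bullet> h = 0")
    case False
    then have "(lam k)\<^sup>2 \<le> B\<^sup>2"
      using bound[of k] \<open>0 \<le> B\<close> by (simp add: abs_le_square_iff[symmetric])
    then show ?thesis by (simp add: b_def mult_right_mono)
  qed (simp add: b_def)
  have "(\<lambda>k. lam k * (v k \<bullet> h) * (v k \<bullet> T h)) sums (T h \<bullet> T h)"
    using sums_inner_T[of h "T h"] by (simp add: inner_commute)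
  then have norm_sums: "(\<lambda>k. (lam k)\<^sup>2 * b k) sums (norm (T h))\<^sup>2"
    unfolding power2_norm_eq_inner
    by (simp add: b_def inner_T_basis inner_commute power2_eq_square mult_ac)
  have "(norm (T h))\<^sup>2 = (\<Sum>k. (lam k)\<^sup>2 * b k)"
    using norm_sums by (rule sums_unique)
  also have "\<dots> \<le> (\<Sum>k. B\<^sup>2 * b k)"
    by (rule suminf_le[OF termwise sums_summable[OF norm_sums] summable_mult[OF summable]])
  also have "\<dots> = B\<^sup>2 * suminf b"
    by (rule suminf_mult[OF summable])
  also have "\<dots> \<le> B\<^sup>2 * (norm h)\<^sup>2"
    using sum_le by (rule mult_left_mono) simp
  finally have "(norm (T h))\<^sup>2 \<le> (B * norm h)\<^sup>2"
    by (simp add: power_mult_distrib)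
  then show ?thesis
    by (rule power2_le_imp_le) (simp add: \<open>0 \<le> B\<close>)
qed

lemma norm_basis: "norm (v j) = 1"
  using orthonormal by (simp add: norm_eq_sqrt_inner)

lemma inner_basis_T: "v j \<bullet> T x = lam j * (v j \<bullet> x)"
  using inner_T_basis by (simp add: inner_commute)

lemma norm_T_pos:
  assumes "0 < lam j" and "v j \<bullet> x \<noteq> 0"
  shows "0 < norm (T x)"
proof -
  have "0 < \<bar>lam j * (v j \<bullet> x)\<bar>"
    using assms by simp
  also have "\<dots> \<le> norm (T x)"
    using Cauchy_Schwarz_ineq2[of "v j" "T x"] by (simp add: norm_basis inner_basis_T)
  finally show ?thesis .
qed

lemma orth_comp_T: "orth_comp (v j) (T x) = T (orth_comp (v j) x)"
  by (simp add: orth_comp_def linear_diff[OF linear_T] linear_scale[OF linear_T]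
      T_basis inner_basis_T)

lemma norm_T_orth_comp_le:
  assumes "0 \<le> B" and "\<And>k. k \<noteq> j \<Longrightarrow> \<bar>lam k\<bar> \<le> B"
  shows "norm (T (orth_comp (v j) x)) \<le> B * norm (orth_comp (v j) x)"
proof (rule norm_T_le[OF assms(1)])
  fix k
  assume "v k \<bullet> orth_comp (v j) x \<noteq> 0"
  then have "k \<noteq> j"
    using inner_orth_comp[OF norm_basis] by auto
  then show "\<bar>lam k\<bar> \<le> B"
    by (rule assms(2))
qed

lemma inner_T_self: "x \<bullet> T x = lam j * (v j \<bullet> x)\<^sup>2 + orth_comp (v j) x \<bullet> T (orth_comp (v j) x)"
proof -
  define r where "r = orth_comp (v j) x"
  have x: "x = (v j \<bullet> x) *\<^sub>R v j + r"
    by (simp add: r_def orth_comp_def)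
  have "T x = (lam j * (v j \<bullet> x)) *\<^sub>R v j + T r"
    using orth_comp_T[of j x] by (simp add: r_def orth_comp_def inner_basis_T algebra_simps)
  moreover have "v j \<bullet> r = 0" "v j \<bullet> T r = 0"
    using inner_orth_comp[OF norm_basis] by (simp_all add: r_def inner_basis_T)
  ultimately show ?thesis
    by (subst (1) x) (simp add: inner_add_left inner_add_right inner_commute orthonormal
        power2_eq_square r_def)
qed

lemma rayleigh_error:
  assumes "\<And>k. \<bar>lam k\<bar> \<le> \<bar>lam j\<bar>"
  shows "\<bar>x \<bullet> T x - lam j * (v j \<bullet> x)\<^sup>2\<bar> \<le> \<bar>lam j\<bar> * (norm (orth_comp (v j) x))\<^sup>2"
proof -
  define r where "r = orth_comp (v j) x"
  have "\<bar>x \<bullet> T x - lam j * (v j \<bullet> x)\<^sup>2\<bar> = \<bar>r \<bullet> T r\<bar>"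
    by (simp add: inner_T_self[of x j] r_def)
  also have "\<dots> \<le> norm r * norm (T r)"
    by (rule Cauchy_Schwarz_ineq2)
  also have "\<dots> \<le> norm r * (\<bar>lam j\<bar> * norm r)"
    using norm_T_orth_comp_le[of "\<bar>lam j\<bar>" j x] assms by (simp add: r_def mult_left_mono)
  finally show ?thesis
    by (simp add: r_def power2_eq_square mult_ac)
qed

lemma power_iteration_invariant:
  assumes lam_pos: "0 < lam j" and "0 \<le> c" and gap: "\<And>k. k \<noteq> j \<Longrightarrow> \<bar>lam k\<bar> \<le> c * lam j"
    and iter: "\<And>k. u (Suc k) = (1 / norm (T (u k))) *\<^sub>R T (u k)"
    and start: "v j \<bullet> u 0 \<noteq> 0"
  shows "sgn (v j \<bullet> u k) = sgn (v j \<bullet> u 0)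
    \<and> norm (orth_comp (v j) (u k)) \<le> c ^ k * (norm (u 0) / \<bar>v j \<bullet> u 0\<bar>) * \<bar>v j \<bullet> u k\<bar>"
proof (induction k)
  case 0
  show ?case
    using norm_orth_comp_le[OF norm_basis, of j "u 0"] start by simp
next
  case (Suc k)
  define a where "a = v j \<bullet> u k"
  define N where "N = norm (T (u k))"
  have "a \<noteq> 0"
    using Suc.IH start by (auto simp: a_def sgn_0_0)
  then have N_pos: "0 < N"
    using norm_T_pos[OF lam_pos] by (simp add: N_def a_def)
  have coeff: "v j \<bullet> u (Suc k) = (lam j / N) * a"
    by (simp add: iter a_def N_def inner_basis_T)
  have "norm (orth_comp (v j) (u (Suc k))) = norm (T (orth_comp (v j) (u k))) / N"
    by (simp add: iter orth_comp_scaleR orth_comp_T N_def)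
  also have "\<dots> \<le> c * lam j * norm (orth_comp (v j) (u k)) / N"
    using norm_T_orth_comp_le[of "c * lam j" j "u k"] gap \<open>0 \<le> c\<close> lam_pos N_pos
    by (simp add: divide_right_mono)
  also have "\<dots> \<le> c * lam j * (c ^ k * (norm (u 0) / \<bar>v j \<bullet> u 0\<bar>) * \<bar>a\<bar>) / N"
    using Suc.IH \<open>0 \<le> c\<close> lam_pos N_pos
    by (intro divide_right_mono mult_left_mono) (simp_all add: a_def)
  also have "\<dots> = c ^ Suc k * (norm (u 0) / \<bar>v j \<bullet> u 0\<bar>) * \<bar>v j \<bullet> u (Suc k)\<bar>"
    using lam_pos N_pos by (simp add: coeff abs_mult)
  finally show ?case
    using Suc.IH lam_pos N_pos by (simp add: coeff sgn_mult a_def)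
qed

lemma power_iteration_error:
  assumes lam_pos: "0 < lam j" and "0 \<le> c" and gap: "\<And>k. k \<noteq> j \<Longrightarrow> \<bar>lam k\<bar> \<le> c * lam j"
    and iter: "\<And>k. u (Suc k) = (1 / norm (T (u k))) *\<^sub>R T (u k)"
    and \<eta>: "0 < \<eta>" "\<eta> \<le> \<bar>v j \<bullet> u 0\<bar>" and "1 \<le> k"
  shows "norm (u k) = 1" and "sgn (v j \<bullet> u k) = sgn (v j \<bullet> u 0)"
    and "(norm (orth_comp (v j) (u k)))\<^sup>2 \<le> c ^ (2 * k) * (norm (u 0))\<^sup>2 / \<eta>\<^sup>2"
proof -
  have start: "v j \<bullet> u 0 \<noteq> 0"
    using \<eta> by auto
  note invariant = power_iteration_invariant[OF lam_pos \<open>0 \<le> c\<close> gap iter start]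
  obtain m where k: "k = Suc m"
    using \<open>1 \<le> k\<close> by (cases k) auto
  have "v j \<bullet> u m \<noteq> 0"
    using invariant[of m] start by (auto simp: sgn_0_0)
  then have "0 < norm (T (u m))"
    by (rule norm_T_pos[OF lam_pos])
  then show unit: "norm (u k) = 1"
    by (simp add: k iter)
  show "sgn (v j \<bullet> u k) = sgn (v j \<bullet> u 0)"
    using invariant by blast
  have "\<bar>v j \<bullet> u k\<bar> \<le> 1"
    using Cauchy_Schwarz_ineq2[of "v j" "u k"] unit by (simp add: norm_basis)
  then have "c ^ k * (norm (u 0) / \<bar>v j \<bullet> u 0\<bar>) * \<bar>v j \<bullet> u k\<bar> \<le> c ^ k * (norm (u 0) / \<bar>v j \<bullet> u 0\<bar>)"
    using \<open>0 \<le> c\<close> by (intro mult_left_le) simp_all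
  then have "norm (orth_comp (v j) (u k)) \<le> c ^ k * (norm (u 0) / \<bar>v j \<bullet> u 0\<bar>)"
    using invariant[of k] by simp
  also have "\<dots> \<le> c ^ k * (norm (u 0) / \<eta>)"
    using \<eta> \<open>0 \<le> c\<close> by (intro mult_left_mono divide_left_mono) simp_all
  finally have "(norm (orth_comp (v j) (u k)))\<^sup>2 \<le> (c ^ k * (norm (u 0) / \<eta>))\<^sup>2"
    by (rule power_mono) simp
  then show "(norm (orth_comp (v j) (u k)))\<^sup>2 \<le> c ^ (2 * k) * (norm (u 0))\<^sup>2 / \<eta>\<^sup>2"
    by (simp add: power_mult_distrib power_divide power_mult mult.commute)
qed

end

theorem mainTheorem8:
  fixes T :: "'a::{real_inner, complete_space} \<Rightarrow> 'a"
    and v :: "nat \<Rightarrow> 'a"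
    and lam :: "nat \<Rightarrow> real"
    and u :: "nat \<Rightarrow> 'a"
    and \<gamma> \<eta> :: real
  assumes orthonormal: "\<And>i j. v i \<bullet> v j = (if i = j then 1 else 0)"
    and basis: "closure (span (range v)) = UNIV"
    and hilbert_schmidt: "summable (\<lambda>k. (lam k)\<^sup>2)"
    and T_expansion: "\<And>h. (\<lambda>k. (lam k * (v k \<bullet> h)) *\<^sub>R v k) sums T h"
    and ordered: "\<And>k. \<bar>lam k\<bar> \<le> \<bar>lam 0\<bar>"
    and lam0_pos: "lam 0 > 0"
    and gamma_pos: "0 < \<gamma>" and gamma_le1: "\<gamma> \<le> 1"
    and gap: "\<And>k. k > 0 \<Longrightarrow> lam 0 - \<bar>lam k\<bar> \<ge> \<gamma> * lam 0"
    and iter: "\<And>k. u (Suc k) = (1 / norm (T (u k))) *\<^sub>R T (u k)"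
    and eta_pos: "\<eta> > 0"
    and overlap: "\<bar>v 0 \<bullet> u 0\<bar> \<ge> \<eta>"
  shows "(\<forall>k\<ge>1. (norm (u k - sgn (v 0 \<bullet> u 0) *\<^sub>R v 0))\<^sup>2
            \<le> 2 * (1 - \<gamma>) ^ (2 * k) * (norm (u 0))\<^sup>2 / \<eta>\<^sup>2)
       \<and> (\<forall>k\<ge>1. real k \<ge> ln (\<eta> / (4 * norm (u 0))) / ln (1 - \<gamma>) \<longrightarrow>
            (norm (sqrt (u k \<bullet> T (u k)) *\<^sub>R u k
                   - (sqrt (lam 0) * sgn (v 0 \<bullet> u 0)) *\<^sub>R v 0))\<^sup>2
            \<le> 18 * lam 0 * (1 - \<gamma>) ^ (2 * k) * (norm (u 0))\<^sup>2 / \<eta>\<^sup>2)"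
proof -
  interpret diagonal_operator T v lam
    using orthonormal T_expansion by unfold_locales
  have contraction: "0 \<le> 1 - \<gamma>" and gap': "\<And>k. k \<noteq> 0 \<Longrightarrow> \<bar>lam k\<bar> \<le> (1 - \<gamma>) * lam 0"
    using gamma_le1 gap by (simp_all add: algebra_simps)
  have error: "norm (u k) = 1" "sgn (v 0 \<bullet> u k) = sgn (v 0 \<bullet> u 0)"
    "(norm (orth_comp (v 0) (u k)))\<^sup>2 \<le> (1 - \<gamma>) ^ (2 * k) * (norm (u 0))\<^sup>2 / \<eta>\<^sup>2" if "1 \<le> k" for k
    using power_iteration_error[OF lam0_pos contraction _ iter eta_pos overlap that] gap' by auto
  show ?thesis
  proof (intro conjI allI impI)
    fix k :: nat
    assume k: "1 \<le> k"
    show "(norm (u k - sgn (v 0 \<bullet> u 0) *\<^sub>R v 0))\<^sup>2 \<le> 2 * (1 - \<gamma>) ^ (2 * k) * (norm (u 0))\<^sup>2 / \<eta>\<^sup>2"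
      using norm_diff_sgn_sq_le[OF norm_basis[of 0] error(1)[OF k]] error(3)[OF k]
      by (simp add: error(2)[OF k])
  next
    fix k :: nat
    assume k: "1 \<le> k" and k_large: "ln (\<eta> / (4 * norm (u 0))) / ln (1 - \<gamma>) \<le> real k"
    have "\<eta> \<le> norm (u 0)"
      using overlap Cauchy_Schwarz_ineq2[of "v 0" "u 0"] by (simp add: norm_basis)
    then have "(1 - \<gamma>) ^ (2 * k) * (norm (u 0))\<^sup>2 / \<eta>\<^sup>2 \<le> 1 / 16"
      using gamma_pos gamma_le1 eta_pos k k_large by (intro power_sq_ratio_le_of_ln_quotient_le) simp_all
    then have small: "2 * (norm (orth_comp (v 0) (u k)))\<^sup>2 \<le> 1"
      using error(3)[OF k] by linarith
    have "\<bar>u k \<bullet> T (u k) - lam 0 * (v 0 \<bullet> u k)\<^sup>2\<bar> \<le> lam 0 * (norm (orth_comp (v 0) (u k)))\<^sup>2"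
      using rayleigh_error[OF ordered] lam0_pos by simp
    then have "(norm (sqrt (u k \<bullet> T (u k)) *\<^sub>R u k - (sqrt (lam 0) * sgn (v 0 \<bullet> u 0)) *\<^sub>R v 0))\<^sup>2
        \<le> 4 * lam 0 * (norm (orth_comp (v 0) (u k)))\<^sup>2"
      using norm_sqrt_rayleigh_sq_le[OF norm_basis error(1)[OF k] lam0_pos _ small]
      by (simp add: error(2)[OF k])
    also have "\<dots> \<le> 18 * lam 0 * ((1 - \<gamma>) ^ (2 * k) * (norm (u 0))\<^sup>2 / \<eta>\<^sup>2)"
      using error(3)[OF k] lam0_pos by (intro mult_mono) simp_all
    finally show "(norm (sqrt (u k \<bullet> T (u k)) *\<^sub>R u k - (sqrt (lam 0) * sgn (v 0 \<bullet> u 0)) *\<^sub>R v 0))\<^sup>2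
        \<le> 18 * lam 0 * (1 - \<gamma>) ^ (2 * k) * (norm (u 0))\<^sup>2 / \<eta>\<^sup>2"
      by simp
  qed
qed

end
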